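(* Let $V$ be a finite dimensional normed vector space and $H\le O(V)$. Let $L_i:H\to\mathbb{R}$ be group-norms such that $d_i(u,v)=\inf_{a\in H}\sqrt{L_i(a)^2+\|au-v\|^2}$ converge uniformly on compact sets to a semi-metric $d_\infty$ on $V$. Then $$G=\{g\in O(V):\ d_\infty(u,gu)=0 \text{ for all } u\in V\}$$ is a closed subgroup of $O(V)$, and for $u,v\in V$, $d_\infty(u,v)=0$ if and only if $v=gu$ for some $g\in G$.
   Context: $O(V)$ is the group of norm-preserving linear maps of $V$. A group-norm on $H$ is $L:H\to\mathbb{R}$ with $L(a)\ge0$, $L(a)=0$ iff $a=e$, $L(a^{-1})=L(a)$, $L(ab)\le L(a)+L(b)$. $G$ is called the wane group. *)

theory Defs
  imports "HOL-Analysis.Analysis"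
begin

definition orth :: "('a::real_normed_vector \<Rightarrow> 'a) set" where
  "orth = {f. linear f \<and> (\<forall>x. norm (f x) = norm x)}"

definition subgroup_orth :: "('a::real_normed_vector \<Rightarrow> 'a) set \<Rightarrow> bool" where
  "subgroup_orth H \<longleftrightarrow> H \<subseteq> orth \<and> id \<in> H \<and>
     (\<forall>a\<in>H. \<forall>b\<in>H. a \<circ> b \<in> H) \<and> (\<forall>a\<in>H. inv a \<in> H)"

definition group_norm :: "('a \<Rightarrow> 'a) set \<Rightarrow> (('a \<Rightarrow> 'a) \<Rightarrow> real) \<Rightarrow> bool" where
  "group_norm H L \<longleftrightarrow>
     (\<forall>a\<in>H. L a \<ge> 0) \<and> (\<forall>a\<in>H. L a = 0 \<longleftrightarrow> a = id) \<and>
     (\<forall>a\<in>H. L (inv a) = L a) \<and> (\<forall>a\<in>H. \<forall>b\<in>H. L (a \<circ> b) \<le> L a + L b)"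

definition dist_L :: "('a::real_normed_vector \<Rightarrow> 'a) set \<Rightarrow> (('a \<Rightarrow> 'a) \<Rightarrow> real) \<Rightarrow> 'a \<Rightarrow> 'a \<Rightarrow> real" where
  "dist_L H L u v = (INF a\<in>H. sqrt ((L a)\<^sup>2 + (norm (a u - v))\<^sup>2))"

definition semi_metric :: "('a \<Rightarrow> 'a \<Rightarrow> real) \<Rightarrow> bool" where
  "semi_metric d \<longleftrightarrow> (\<forall>x y. d x y \<ge> 0) \<and> (\<forall>x. d x x = 0) \<and> (\<forall>x y. d x y = d y x) \<and>
     (\<forall>x y z. d x z \<le> d x y + d y z)"

end

theory Submission
  imports Defs
begin

text \<open>
  It gives \<open>d\<^sub>\<infinity>(u,v) \<le> \<parallel>u - v\<parallel>\<close>, so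
  \<open>d\<^sub>\<infinity>\<close> is 1-Lipschitz, and the wane group \<open>G\<close> is closed in \<open>O(V)\<close> as an intersection of
  zero sets of continuous functions.  The group axioms for \<open>G\<close> follow from the triangle
  inequality and symmetry of \<open>d\<^sub>\<infinity>\<close>; inverses exist in \<open>O(V)\<close> because \<open>V\<close> is finite
  dimensional.  For the orbit statement, \<open>d\<^sub>\<infinity>(u,v) = 0\<close> yields \<open>a\<^sub>i \<in> H\<close> with
  \<open>L\<^sub>i(a\<^sub>i) \<rightarrow> 0\<close> and \<open>a\<^sub>i u \<rightarrow> v\<close>; by compactness of \<open>O(V)\<close> a subsequence converges to some
  \<open>g \<in> O(V)\<close>, and \<open>d\<^sub>i(w, g w) \<le> L\<^sub>i(a\<^sub>i) + \<parallel>g w - a\<^sub>i w\<parallel>\<close> forces \<open>g \<in> G\<close>.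
\<close>

lemma closed_if_compact_cball_parts:
  fixes T :: "'a::real_normed_vector set"
  assumes cpt: "\<And>r. compact (T \<inter> cball 0 r)"
  shows "closed T"
proof -
  have "l \<in> T" if l: "l \<in> closure T" for l
  proof -
    define K where "K = T \<inter> cball 0 (norm l + 1)"
    have "ball l 1 \<subseteq> cball 0 (norm l + 1)"
    proof
      fix x assume "x \<in> ball l 1"
      then have "norm (x - l) < 1" by (simp add: dist_norm norm_minus_commute)
      then show "x \<in> cball 0 (norm l + 1)" using norm_triangle_sub[of x l] by simp
    qed
    then have "ball l 1 \<inter> T \<subseteq> K" by (auto simp: K_def)
    have "l \<in> ball l 1 \<inter> closure T" using l by simp
    also have "\<dots> \<subseteq> closure (ball l 1 \<inter> T)" by (rule open_Int_closure_subset) simp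
    also have "\<dots> \<subseteq> closure K" by (rule closure_mono) fact
    also have "\<dots> = K" unfolding K_def using cpt by (simp add: compact_imp_closed)
    finally show ?thesis by (simp add: K_def)
  qed
  then show ?thesis using closure_subset_eq by blast
qed

lemma infdist_scaled_offset:
  fixes a y :: "'a::real_normed_vector"
  assumes "subspace S" "y \<in> S"
  shows "\<bar>c\<bar> * infdist a S \<le> norm (c *\<^sub>R a + y)"
proof (cases "c = 0")
  case True
  then show ?thesis by simp
next
  case False
  have "- ((1 / c) *\<^sub>R y) \<in> S" using assms by (simp add: subspace_neg subspace_scale)
  then have "infdist a S \<le> norm (a + (1 / c) *\<^sub>R y)"
    using infdist_le by (fastforce simp: dist_norm)
  then have "\<bar>c\<bar> * infdist a S \<le> \<bar>c\<bar> * norm (a + (1 / c) *\<^sub>R y)"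
    by (simp add: mult_left_mono)
  also have "\<dots> = norm (c *\<^sub>R a + y)"
    using False by (simp flip: norm_scaleR add: scaleR_add_right)
  finally show ?thesis .
qed

text \<open>Induction on the spanning set: adding
  a vector \<open>a\<notin>span S\<close>, the coefficient of \<open>a\<close> is bounded by the previous lemma, so the new
  bounded part sits inside a sum of two compact sets.\<close>

lemma compact_span_cball:
  fixes S :: "'a::real_normed_vector set"
  assumes "finite S"
  shows "compact (span S \<inter> cball 0 r)"
  using assms
proof (induction S arbitrary: r rule: finite_induct)
  case empty
  show ?case by (simp add: finite_imp_compact)
next
  case (insert a S)
  show ?case
  proof (cases "a \<in> span S")
    case True
    then show ?thesis using insert.IH by (simp add: span_redundant)
  next
    case False
    define \<delta> where "\<delta> = infdist a (span S)"
    have "closed (span S)" using insert.IH by (rule closed_if_compact_cball_parts)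
    then have "\<delta> > 0" unfolding \<delta>_def using False span_zero
      by (intro infdist_pos_not_in_closed) auto
    define M where "M = r / \<delta>"
    define K where "K = {y + z | y z. y \<in> span S \<inter> cball 0 (r + M * norm a)
                                  \<and> z \<in> (\<lambda>c. c *\<^sub>R a) ` {-M..M}}"
    have "compact K" unfolding K_def
      by (intro compact_sums insert.IH compact_continuous_image continuous_intros) simp
    have "span (insert a S) \<inter> cball 0 r \<subseteq> K"
    proof
      fix x assume x: "x \<in> span (insert a S) \<inter> cball 0 r"
      then obtain k where y: "x - k *\<^sub>R a \<in> span S" by (auto simp: span_breakdown_eq)
      have "\<bar>k\<bar> * \<delta> \<le> norm x"
        using infdist_scaled_offset[OF subspace_span y, of k a] by (simp add: \<delta>_def)
      then have k: "\<bar>k\<bar> \<le> M" using x \<open>\<delta> > 0\<close> by (simp add: M_def field_simps)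
      have "norm (x - k *\<^sub>R a) \<le> norm x + \<bar>k\<bar> * norm a" using norm_triangle_ineq4[of x "k *\<^sub>R a"] by simp
      also have "\<dots> \<le> r + M * norm a" using x k by (intro add_mono mult_right_mono) auto
      finally have "x - k *\<^sub>R a \<in> span S \<inter> cball 0 (r + M * norm a)" using y by simp
      moreover have "k *\<^sub>R a \<in> (\<lambda>c. c *\<^sub>R a) ` {-M..M}" using k by (intro imageI) (simp add: abs_le_iff)
      ultimately show "x \<in> K" unfolding K_def by force
    qed
    moreover have "K \<subseteq> span (insert a S)"
      unfolding K_def by (auto intro: span_add span_scale span_base span_mono[THEN subsetD, rotated])
    ultimately have "span (insert a S) \<inter> cball 0 r = K \<inter> cball 0 r" by blast
    then show ?thesis using \<open>compact K\<close> by (simp add: compact_Int_closed)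
  qed
qed

lemma common_convergent_subseq:
  fixes f :: "nat \<Rightarrow> 'b \<Rightarrow> 'a::metric_space"
  assumes "finite B"
    and cpt: "\<And>b. b \<in> B \<Longrightarrow> compact (K b)"
    and in_K: "\<And>i b. b \<in> B \<Longrightarrow> f i b \<in> K b"
  shows "\<exists>r. strict_mono r \<and> (\<forall>b\<in>B. convergent (\<lambda>i. f (r i) b))"
  using assms(1) cpt in_K
proof (induction B rule: finite_induct)
  case empty
  show ?case by (auto intro: strict_mono_id)
next
  case (insert b B)
  then obtain r where r: "strict_mono r" "\<forall>b'\<in>B. convergent (\<lambda>i. f (r i) b')"
    by auto
  have "seq_compact (K b)" using insert.prems by (simp add: compact_imp_seq_compact)
  then obtain l r' where r': "strict_mono r'" "((\<lambda>i. f (r i) b) \<circ> r') \<longlonglongrightarrow> l"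
    using insert.prems by (metis seq_compactE insertI1)
  have "convergent (\<lambda>i. f (r (r' i)) b')" if b': "b' \<in> insert b B" for b'
  proof (cases "b' = b")
    case True
    then show ?thesis using r'(2) by (auto simp: convergent_def o_def)
  next
    case False
    then obtain l' where "(\<lambda>i. f (r i) b') \<longlonglongrightarrow> l'"
      using b' r(2) by (auto simp: convergent_def)
    from LIMSEQ_subseq_LIMSEQ[OF this r'(1)] show ?thesis by (auto simp: convergent_def o_def)
  qed
  then show ?case using strict_mono_o[OF r(1) r'(1)] by (auto simp: o_def)
qed

lemma convergent_linear_on_span:
  fixes f :: "nat \<Rightarrow> 'a::real_vector \<Rightarrow> 'b::real_normed_vector"
  assumes "finite B" "\<And>i. linear (f i)" "\<forall>b\<in>B. convergent (\<lambda>i. f i b)"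
    and "x \<in> span B"
  shows "convergent (\<lambda>i. f i x)"
proof -
  obtain u where x: "x = (\<Sum>b\<in>B. u b *\<^sub>R b)" using assms(1,4) by (auto simp: span_finite)
  obtain l where "\<And>b. b \<in> B \<Longrightarrow> (\<lambda>i. f i b) \<longlonglongrightarrow> l b"
    using assms(3) unfolding convergent_def by metis
  then have "(\<lambda>i. \<Sum>b\<in>B. u b *\<^sub>R f i b) \<longlonglongrightarrow> (\<Sum>b\<in>B. u b *\<^sub>R l b)"
    by (intro tendsto_intros)
  moreover have "f i x = (\<Sum>b\<in>B. u b *\<^sub>R f i b)" for i
    unfolding x using assms(2) by (simp add: linear_sum linear_scale)
  ultimately show ?thesis by (auto simp: convergent_def)
qed

lemma orth_linear: "g \<in> orth \<Longrightarrow> linear g"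
  and orth_norm: "g \<in> orth \<Longrightarrow> norm (g x) = norm x"
  by (simp_all add: orth_def)

lemma orth_bounded_linear: "g \<in> orth \<Longrightarrow> bounded_linear g"
  unfolding orth_def by (auto intro!: bounded_linear_intro[of g 1] simp: linear_add linear_scale)

lemma orth_inj:
  assumes g: "g \<in> orth"
  shows "inj g"
proof (rule injI)
  fix x y assume "g x = g y"
  then have "norm (x - y) = 0"
    using orth_norm[OF g, of "x - y"] linear_diff[OF orth_linear[OF g]] by simp
  then show "x = y" by simp
qed

lemma orth_inv:
  fixes g :: "'a::real_normed_vector \<Rightarrow> 'a" and B :: "'a set"
  assumes B: "finite B" "span B = UNIV" and g: "g \<in> orth"
  shows "surj g" "inv g \<in> orth"
proof -
  obtain Bs where Bs: "Bs \<subseteq> B" "independent Bs" "B \<subseteq> span Bs"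
    using maximal_independent_subset[of B] by blast
  have "span Bs = UNIV" using B(2) Bs(3) by (metis span_mono span_span top.extremum_uniqueI)
  moreover have "finite Bs" using Bs(1) B(1) finite_subset by blast
  ultimately interpret fd: finite_dimensional_vector_space "scaleR :: real \<Rightarrow> 'a \<Rightarrow> 'a" Bs
    by unfold_locales (use Bs(2) in \<open>auto simp: dependent_raw_def span_raw_def\<close>)
  have lin: "Vector_Spaces.linear scaleR scaleR g"
    using orth_linear[OF g] by (simp add: Real_Vector_Spaces.linear_def)
  show surj: "surj g" using fd.linear_inj_imp_surj[OF lin orth_inj[OF g]] .
  have "linear (inv g)"
    using fd.inj_linear_imp_inv_linear[OF lin orth_inj[OF g]]
    by (simp add: Real_Vector_Spaces.linear_def)
  moreover have "norm (inv g x) = norm x" for x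
    using orth_norm[OF g, of "inv g x"] surj by (simp add: surj_f_inv_f)
  ultimately show "inv g \<in> orth" by (simp add: orth_def)
qed

lemma orth_pointwise_limit:
  fixes a :: "nat \<Rightarrow> 'a::real_normed_vector \<Rightarrow> 'a" and B :: "'a set"
  assumes B: "finite B" "span B = UNIV" and a: "\<And>i. a i \<in> orth"
  obtains r g where "strict_mono r" "g \<in> orth" "\<And>w. (\<lambda>i. a (r i) w) \<longlonglongrightarrow> g w"
proof -
  have "compact (cball (0::'a) R)" for R
    using compact_span_cball[OF B(1), of R] B(2) by simp
  moreover have "a i b \<in> cball 0 (norm b)" for i b
    using orth_norm[OF a] by simp
  ultimately obtain r where r: "strict_mono r" "\<forall>b\<in>B. convergent (\<lambda>i. a (r i) b)"
    using common_convergent_subseq[OF B(1), of "\<lambda>b. cball 0 (norm b)" a] by blast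
  define g where "g w = lim (\<lambda>i. a (r i) w)" for w
  have lim_g: "(\<lambda>i. a (r i) w) \<longlonglongrightarrow> g w" for w
    using convergent_linear_on_span[OF B(1) orth_linear[OF a] r(2), of w] B(2)
    by (simp add: g_def convergent_LIMSEQ_iff)
  have "linear g"
  proof (rule linearI)
    fix x y
    have "(\<lambda>i. a (r i) (x + y)) \<longlonglongrightarrow> g x + g y"
      using tendsto_add[OF lim_g lim_g] orth_linear[OF a] by (simp add: linear_add)
    then show "g (x + y) = g x + g y" using lim_g LIMSEQ_unique by blast
  next
    fix c x
    have "(\<lambda>i. a (r i) (c *\<^sub>R x)) \<longlonglongrightarrow> c *\<^sub>R g x"
      using tendsto_scaleR[OF tendsto_const lim_g] orth_linear[OF a] by (simp add: linear_scale)
    then show "g (c *\<^sub>R x) = c *\<^sub>R g x" using lim_g LIMSEQ_unique by blast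
  qed
  moreover have "norm (g w) = norm w" for w
  proof -
    have "(\<lambda>i. norm w) \<longlonglongrightarrow> norm (g w)"
      using tendsto_norm[OF lim_g[of w]] by (simp add: orth_norm[OF a])
    then show ?thesis by (simp add: LIMSEQ_const_iff)
  qed
  ultimately have "g \<in> orth" by (simp add: orth_def)
  with r(1) lim_g show ?thesis using that by blast
qed

lemma sqrt_sum_squares_lipschitz:
  fixes l p q :: real
  shows "sqrt (l\<^sup>2 + p\<^sup>2) \<le> sqrt (l\<^sup>2 + q\<^sup>2) + \<bar>p - q\<bar>"
  using real_sqrt_sum_squares_triangle_ineq[of l 0 q "p - q"] by simp

context
  fixes H :: "('a::real_normed_vector \<Rightarrow> 'a) set" and L :: "('a \<Rightarrow> 'a) \<Rightarrow> real"
  assumes H: "subgroup_orth H" and L: "group_norm H L"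
begin

lemma dist_L_bdd_below: "bdd_below ((\<lambda>a. sqrt ((L a)\<^sup>2 + (norm (a u - v))\<^sup>2)) ` H)"
  by (rule bdd_belowI[of _ 0]) auto

lemma dist_L_nonneg: "0 \<le> dist_L H L u v"
  using H unfolding dist_L_def subgroup_orth_def by (intro cINF_greatest) auto

lemma dist_L_le: "a \<in> H \<Longrightarrow> dist_L H L u v \<le> sqrt ((L a)\<^sup>2 + (norm (a u - v))\<^sup>2)"
  unfolding dist_L_def by (rule cINF_lower[OF dist_L_bdd_below])

lemma dist_L_le_group_norm: "a \<in> H \<Longrightarrow> dist_L H L w (a w) \<le> L a"
  using dist_L_le[of a w "a w"] L unfolding group_norm_def by auto

text \<open>Taking \<open>a = id\<close>, \<open>d\<^sub>L\<close> is dominated by the norm distance.\<close>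

lemma dist_L_le_norm: "dist_L H L u v \<le> norm (u - v)"
proof -
  have "id \<in> H" "L id = 0" using H L unfolding subgroup_orth_def group_norm_def by auto
  then show ?thesis using dist_L_le[of id u v] by simp
qed

lemma dist_L_lipschitz: "dist_L H L w x \<le> dist_L H L w y + norm (x - y)"
proof -
  have "dist_L H L w x - norm (x - y) \<le> dist_L H L w y"
    unfolding dist_L_def[of H L w y] using H unfolding subgroup_orth_def
  proof (intro cINF_greatest)
    fix a assume a: "a \<in> H"
    have "\<bar>norm (a w - x) - norm (a w - y)\<bar> \<le> norm (x - y)"
      using norm_triangle_ineq3[of "a w - x" "a w - y"] by (simp add: norm_minus_commute)
    then show "dist_L H L w x - norm (x - y) \<le> sqrt ((L a)\<^sup>2 + (norm (a w - y))\<^sup>2)"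
      using dist_L_le[OF a, of w x] sqrt_sum_squares_lipschitz[of "L a" "norm (a w - x)" "norm (a w - y)"]
      by linarith
  qed auto
  then show ?thesis by linarith
qed

lemma dist_L_approx:
  assumes "e > 0"
  obtains a where "a \<in> H" "L a < dist_L H L u v + e" "norm (a u - v) < dist_L H L u v + e"
proof -
  have "H \<noteq> {}" using H unfolding subgroup_orth_def by auto
  moreover have "Inf ((\<lambda>a. sqrt ((L a)\<^sup>2 + (norm (a u - v))\<^sup>2)) ` H) < dist_L H L u v + e"
    using assms unfolding dist_L_def by simp
  ultimately obtain a where a: "a \<in> H" "sqrt ((L a)\<^sup>2 + (norm (a u - v))\<^sup>2) < dist_L H L u v + e"
    using cInf_lessD[of "(\<lambda>a. sqrt ((L a)\<^sup>2 + (norm (a u - v))\<^sup>2)) ` H"] by auto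
  have "norm (a u - v) \<le> sqrt ((L a)\<^sup>2 + (norm (a u - v))\<^sup>2)"
    using real_sqrt_sum_squares_ge2 .
  moreover have "L a \<le> sqrt ((L a)\<^sup>2 + (norm (a u - v))\<^sup>2)" by simp
  ultimately show ?thesis using a by (intro that[of a]) linarith+
qed

end

definition wane_group :: "('a::real_normed_vector \<Rightarrow> 'a \<Rightarrow> real) \<Rightarrow> ('a \<Rightarrow> 'a) set" where
  "wane_group d = {g \<in> orth. \<forall>u. d u (g u) = 0}"

context
  fixes H :: "('a::real_normed_vector \<Rightarrow> 'a) set"
    and L :: "nat \<Rightarrow> ('a \<Rightarrow> 'a) \<Rightarrow> real"
    and dinf :: "'a \<Rightarrow> 'a \<Rightarrow> real"
  assumes H: "subgroup_orth H"
    and L: "\<And>i. group_norm H (L i)"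
    and lim: "\<And>u v. (\<lambda>i. dist_L H (L i) u v) \<longlonglongrightarrow> dinf u v"
    and semi: "semi_metric dinf"
begin

lemma dinf_nonneg: "0 \<le> dinf u v"
  using semi unfolding semi_metric_def by blast

lemma dinf_triangle: "dinf u w \<le> dinf u v + dinf v w"
  using semi unfolding semi_metric_def by blast

lemma dinf_sym: "dinf u v = dinf v u"
  using semi unfolding semi_metric_def by blast

lemma dinf_refl: "dinf u u = 0"
  using semi unfolding semi_metric_def by blast

text \<open>Passing \<open>d\<^sub>L \<le> \<parallel>\<cdot>\<parallel>\<close> to the limit: the limit distance is 1-Lipschitz in each argument.\<close>

lemma dinf_lipschitz: "dinf u x \<le> dinf u y + norm (x - y)"
proof -
  have "dinf y x \<le> norm (y - x)"
    using lim by (rule LIMSEQ_le_const2) (use dist_L_le_norm[OF H L] in auto)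
  then show ?thesis using dinf_triangle[of u x y] by (simp add: norm_minus_commute)
qed

lemma continuous_dinf: "continuous_on UNIV (dinf u)"
proof (rule lipschitz_on_continuous_on)
  show "1-lipschitz_on UNIV (dinf u)"
  proof (rule lipschitz_onI)
    fix x y
    show "dist (dinf u x) (dinf u y) \<le> 1 * dist x y"
      using dinf_lipschitz[of u x y] dinf_lipschitz[of u y x]
      by (simp add: dist_real_def dist_norm norm_minus_commute abs_le_iff)
  qed simp
qed

text \<open>First claim: the wane group is a subgroup of \<open>O(V)\<close>; composition is handled by the
  triangle inequality, inverses by symmetry.\<close>

lemma subgroup_wane_group:
  fixes B :: "'a set"
  assumes "finite B" "span B = UNIV"
  shows "subgroup_orth (wane_group dinf)"
  unfolding subgroup_orth_def
proof (intro conjI ballI)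
  show "wane_group dinf \<subseteq> orth" unfolding wane_group_def by auto
  show "id \<in> wane_group dinf" unfolding wane_group_def orth_def by (simp add: dinf_refl linear_id)
next
  fix g h assume "g \<in> wane_group dinf" "h \<in> wane_group dinf"
  then have "g \<circ> h \<in> orth" "dinf u (g (h u)) = 0" for u
    using dinf_triangle[of u "g (h u)" "h u"] dinf_nonneg[of u "g (h u)"]
    unfolding wane_group_def orth_def by (auto intro: linear_compose)
  then show "g \<circ> h \<in> wane_group dinf" unfolding wane_group_def by auto
next
  fix g assume g: "g \<in> wane_group dinf"
  then have go: "g \<in> orth" unfolding wane_group_def by simp
  have "dinf u (inv g u) = 0" for u
  proof -
    have "dinf (inv g u) (g (inv g u)) = 0" using g unfolding wane_group_def by simp
    moreover have "g (inv g u) = u" using orth_inv(1)[OF assms go] by (simp add: surj_f_inv_f)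
    ultimately show ?thesis by (simp add: dinf_sym)
  qed
  then show "inv g \<in> wane_group dinf"
    using orth_inv(2)[OF assms go] unfolding wane_group_def by simp
qed

text \<open>Second claim: as a set of bounded operators the wane group is closed in \<open>O(V)\<close>,
  being cut out by the continuous conditions \<open>dinf u (f u) = 0\<close>.\<close>

lemma closed_wane_group:
  "closedin (top_of_set (Blinfun ` orth)) (Blinfun ` wane_group dinf)"
proof -
  define C where "C = (\<Inter>u. {f :: 'a \<Rightarrow>\<^sub>L 'a. dinf u (blinfun_apply f u) = 0})"
  have "closed {f :: 'a \<Rightarrow>\<^sub>L 'a. dinf u (blinfun_apply f u) = 0}" for u
  proof (rule closed_Collect_eq[OF _ continuous_on_const])
    show "continuous_on UNIV (\<lambda>f :: 'a \<Rightarrow>\<^sub>L 'a. dinf u (blinfun_apply f u))"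
      by (rule continuous_on_compose2[OF continuous_dinf]) (intro continuous_intros, auto)
  qed
  then have "closed C" unfolding C_def by blast
  moreover have "Blinfun ` wane_group dinf = Blinfun ` orth \<inter> C"
    by (auto simp: wane_group_def C_def bounded_linear_Blinfun_apply orth_bounded_linear)
  ultimately show ?thesis by (simp add: closedin_closed_Int)
qed

lemma approximating_elements:
  assumes "dinf u v = 0"
  obtains a where "\<And>i. a i \<in> H" "(\<lambda>i. L i (a i)) \<longlonglongrightarrow> 0" "(\<lambda>i. a i u) \<longlonglongrightarrow> v"
proof -
  define e where "e i = dist_L H (L i) u v + inverse (real (Suc i))" for i
  have "(\<lambda>i. dist_L H (L i) u v + inverse (real (Suc i))) \<longlonglongrightarrow> dinf u v + 0"
    by (intro tendsto_add lim LIMSEQ_inverse_real_of_nat)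
  then have e: "e \<longlonglongrightarrow> 0" using assms by (simp add: e_def[abs_def])
  have "\<forall>i. \<exists>a. a \<in> H \<and> L i a < e i \<and> norm (a u - v) < e i"
    unfolding e_def by (metis dist_L_approx[OF H L] inverse_positive_iff_positive of_nat_0_less_iff zero_less_Suc)
  then obtain a where a: "\<And>i. a i \<in> H" "\<And>i. L i (a i) < e i" "\<And>i. norm (a i u - v) < e i"
    by metis
  have "0 \<le> L i (a i)" for i using L[of i] a(1)[of i] unfolding group_norm_def by auto
  then have "(\<lambda>i. L i (a i)) \<longlonglongrightarrow> 0"
    using a(2) by (intro tendsto_sandwich[OF _ _ tendsto_const e]) (auto intro!: always_eventually less_imp_le)
  moreover have "(\<lambda>i. norm (a i u - v)) \<longlonglongrightarrow> 0"
    using a(3) by (intro tendsto_sandwich[OF _ _ tendsto_const e]) (auto intro!: always_eventually less_imp_le)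
  then have "(\<lambda>i. a i u) \<longlonglongrightarrow> v" by (simp add: tendsto_norm_zero_iff LIM_zero_iff)
  ultimately show ?thesis using a(1) that by blast
qed

text \<open>A pointwise limit of such \<open>a\<^sub>i\<close> (along a subsequence) lies in the wane group, since
  \<open>d\<^sub>i(w, g w) \<le> L\<^sub>i a\<^sub>i + \<parallel>g w - a\<^sub>i w\<parallel> \<rightarrow> 0\<close>.\<close>

lemma wane_group_limit:
  assumes a: "\<And>i. a i \<in> H" "(\<lambda>i. L i (a i)) \<longlonglongrightarrow> 0"
    and r: "strict_mono r" and g: "g \<in> orth" "\<And>w. (\<lambda>i. a (r i) w) \<longlonglongrightarrow> g w"
  shows "g \<in> wane_group dinf"
proof -
  have "dinf w (g w) = 0" for w
  proof -
    have bound: "dist_L H (L (r i)) w (g w) \<le> L (r i) (a (r i)) + norm (g w - a (r i) w)" for i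
      using dist_L_lipschitz[OF H L, of "r i" w "g w" "a (r i) w"]
        dist_L_le_group_norm[OF H L a(1)[of "r i"], of "r i" w] by linarith
    have majorant: "(\<lambda>i. L (r i) (a (r i)) + norm (g w - a (r i) w)) \<longlonglongrightarrow> 0 + 0"
    proof (intro tendsto_add)
      show "(\<lambda>i. L (r i) (a (r i))) \<longlonglongrightarrow> 0"
        using LIMSEQ_subseq_LIMSEQ[OF a(2) r] by (simp add: o_def)
      have "(\<lambda>i. g w - a (r i) w) \<longlonglongrightarrow> 0"
        using tendsto_diff[OF tendsto_const[of "g w"] g(2)[of w]] by simp
      then show "(\<lambda>i. norm (g w - a (r i) w)) \<longlonglongrightarrow> 0"
        by (simp add: tendsto_norm_zero_iff)
    qed
    have "(\<lambda>i. dist_L H (L (r i)) w (g w)) \<longlonglongrightarrow> 0"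
      by (rule tendsto_sandwich[OF _ _ tendsto_const majorant[simplified]])
        (use bound dist_L_nonneg[OF H L] in \<open>auto intro!: always_eventually\<close>)
    moreover have "(\<lambda>i. dist_L H (L (r i)) w (g w)) \<longlonglongrightarrow> dinf w (g w)"
      using LIMSEQ_subseq_LIMSEQ[OF lim r] by (simp add: o_def)
    ultimately show ?thesis using LIMSEQ_unique by blast
  qed
  then show ?thesis using g(1) by (simp add: wane_group_def)
qed

lemma wane_group_orbit:
  fixes B :: "'a set"
  assumes B: "finite B" "span B = UNIV"
  shows "dinf u v = 0 \<longleftrightarrow> (\<exists>g\<in>wane_group dinf. v = g u)"
proof
  assume "dinf u v = 0"
  then obtain a where a: "\<And>i. a i \<in> H" "(\<lambda>i. L i (a i)) \<longlonglongrightarrow> 0" "(\<lambda>i. a i u) \<longlonglongrightarrow> v"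
    by (rule approximating_elements) blast
  have a_orth: "\<And>i. a i \<in> orth" using a(1) H unfolding subgroup_orth_def by auto
  obtain r g where r: "strict_mono r" "g \<in> orth" "\<And>w. (\<lambda>i. a (r i) w) \<longlonglongrightarrow> g w"
    by (rule orth_pointwise_limit[of B a, OF B a_orth]) blast
  have "(\<lambda>i. a (r i) u) \<longlonglongrightarrow> v" using LIMSEQ_subseq_LIMSEQ[OF a(3) r(1)] by (simp add: o_def)
  then have "g u = v" using LIMSEQ_unique[OF r(3)] by blast
  then show "\<exists>g\<in>wane_group dinf. v = g u"
    using wane_group_limit[OF a(1,2) r] by blast
next
  assume "\<exists>g\<in>wane_group dinf. v = g u"
  then show "dinf u v = 0" by (auto simp: wane_group_def)
qed

end

text \<open>Uniform convergence on compact sets in particular gives pointwise convergence, which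
  is all the three claims above require.\<close>

theorem mainTheorem14:
  fixes H :: "('a::real_normed_vector \<Rightarrow> 'a) set"
    and L :: "nat \<Rightarrow> ('a \<Rightarrow> 'a) \<Rightarrow> real"
    and dinf :: "'a \<Rightarrow> 'a \<Rightarrow> real"
  assumes findim: "\<exists>B. finite B \<and> span B = (UNIV :: 'a set)"
    and H: "subgroup_orth H"
    and L: "\<And>i. group_norm H (L i)"
    and conv: "\<And>K. compact K \<Longrightarrow>
       uniform_limit K (\<lambda>i (u, v). dist_L H (L i) u v) (\<lambda>(u, v). dinf u v) sequentially"
    and semi: "semi_metric dinf"
  defines "G \<equiv> {g \<in> orth. \<forall>u. dinf u (g u) = 0}"
  shows "subgroup_orth G \<and> closedin (top_of_set (Blinfun ` orth)) (Blinfun ` G)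
    \<and> (\<forall>u v. dinf u v = 0 \<longleftrightarrow> (\<exists>g\<in>G. v = g u))"
proof -
  obtain B :: "'a set" where B: "finite B" "span B = UNIV" using findim by blast
  have lim: "(\<lambda>i. dist_L H (L i) u v) \<longlonglongrightarrow> dinf u v" for u v
    using tendsto_uniform_limitI[OF conv[of "{(u, v)}"], of "(u, v)"] by simp
  have "G = wane_group dinf" by (simp add: G_def wane_group_def)
  then show ?thesis
    using subgroup_wane_group[OF H L lim semi B] closed_wane_group[OF H L lim semi]
      wane_group_orbit[OF H L lim semi B]
    by simp
qed

end
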